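(* Let $n\in\mathbb{N}_+$, $n\ge 3$, and for $x\in[0,1]$ let \[ \Phi_n(x):=(n+1)\int_0^1 \left(t^2+(1-t)^2\right)\frac{(nx-3)t^2(1-t)^{n-2}-(nx-2)t^3(1-t)^{n-3}+t^{nx}(1-t)^{n(1-x)}}{(1-2t)^2}\,dt. \] Then $\Phi_n$ is convex on $[0,1]$ and \[ -\frac{4}{n}\le \Phi_n(x)\le\frac{16}{n},\quad x\in\left[\frac1n,1-\frac1n\right]. \] *)

theory Defs
  imports "HOL-Analysis.Analysis"
begin

text \<open>The integrand has a removable singularity at t = 1/2 (a single point, irrelevant
  for the integral).\<close>

definition Phi :: "nat \<Rightarrow> real \<Rightarrow> real" where
  "Phi n x = (real n + 1) * integral {0..1} (\<lambda>t::real.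
     (t^2 + (1 - t)^2) *
     (((real n * x - 3) * t^2 * (1 - t)^(n - 2)
       - (real n * x - 2) * t^3 * (1 - t)^(n - 3)
       + t powr (real n * x) * (1 - t) powr (real n * (1 - x)))
      / (1 - 2 * t)^2))"

end

theory Submission
  imports Defs
begin

text \<open>
  For fixed t the integrand is a nonnegative multiple of an affine function of x plus
  t^(nx) (1-t)^(n(1-x)), the exponential of an affine function of x.  Hence it is convex in x,
  and so is its integral Phi_n.  The integral exists because the numerator vanishes to second
  order at t = 1/2: with s = t/(1-t) and a = nx - 2 it equals (1-t)^n s^2 (s^a - 1 - a(s - 1)),
  a Taylor remainder.

  At the nodes x = k/n all powers are polynomial.  The numerator vanishes for k = 2, 3, and for
  k = 1 and k = n - 1 it is (1-2t)^2 times a polynomial with nonnegative coefficients, whose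
  integral is a sum of Beta integrals.  This gives Phi_n(2/n) = Phi_n(3/n) = 0,
  0 <= Phi_n(1/n) <= 4/n and Phi_n(1 - 1/n) <= 16/n.  By convexity the maximum on [1/n, 1 - 1/n]
  is attained at an endpoint, and Phi_n lies above the secant through the nodes 2/n, 3/n
  outside (2/n, 3/n) and above the secant through 1/n, 2/n inside it.
\<close>

lemma convex_on_secant_le_outside:
  fixes f :: "real \<Rightarrow> real"
  assumes f: "convex_on I f" and I: "a \<in> I" "b \<in> I" "x \<in> I"
    and "a < b" and x: "x \<notin> {a<..<b}"
  shows "f a + (f b - f a) / (b - a) * (x - a) \<le> f x"
proof -
  have slope_sym: "(f a - f b) / (a - b) = (f b - f a) / (b - a)"
    by (metis minus_diff_eq minus_divide_divide)
  consider "x < a" | "x = a" | "b \<le> x" using x by fastforce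
  then show ?thesis
  proof cases
    case 1
    have "(f x - f a) / (x - a) \<le> (f x - f b) / (x - b)"
      using convex_on_slope_le(1)[OF f I(3,2), of a] 1 \<open>a < b\<close> by simp
    also have "\<dots> \<le> (f b - f a) / (b - a)"
      using convex_on_slope_le(2)[OF f I(3,2), of a] 1 \<open>a < b\<close> slope_sym by simp
    finally show ?thesis
      using 1 by (simp add: neg_divide_le_eq algebra_simps)
  next
    case 3
    show ?thesis
    proof (cases "x = b")
      case False
      have "(f b - f a) / (b - a) \<le> (f a - f x) / (a - x)"
        using convex_on_slope_le(1)[OF f I(1,3), of b] 3 False \<open>a < b\<close> slope_sym by simp
      also have "\<dots> = (f x - f a) / (x - a)"
        by (metis minus_diff_eq minus_divide_divide)
      finally show ?thesis
        using 3 \<open>a < b\<close> by (simp add: le_divide_eq algebra_simps)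
    qed (use \<open>a < b\<close> in simp)
  qed simp
qed

lemma convex_on_integral:
  fixes f :: "'a::real_vector \<Rightarrow> 'b::euclidean_space \<Rightarrow> real"
  assumes "convex S"
    and integrable: "\<And>x. x \<in> S \<Longrightarrow> f x integrable_on A"
    and convex: "\<And>t. t \<in> A \<Longrightarrow> convex_on S (\<lambda>x. f x t)"
  shows "convex_on S (\<lambda>x. integral A (f x))"
proof (rule convex_onI[OF _ \<open>convex S\<close>])
  fix l :: real and x y
  assume l: "0 < l" "l < 1" and xy: "x \<in> S" "y \<in> S"
  let ?z = "(1 - l) *\<^sub>R x + l *\<^sub>R y"
  have "?z \<in> S" using \<open>convex S\<close> xy l by (simp add: convex_alt)
  then have "integral A (f ?z) \<le> integral A (\<lambda>t. (1 - l) * f x t + l * f y t)"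
    using l xy integrable convex
    by (intro integral_le) (auto intro!: integrable_add integrable_on_mult_right convex_onD)
  also have "\<dots> = (1 - l) * integral A (f x) + l * integral A (f y)"
    using xy integrable by (subst integral_add) (auto intro: integrable_on_mult_right)
  finally show "integral A (f ?z) \<le> (1 - l) * integral A (f x) + l * integral A (f y)" .
qed

lemma convex_on_powr_mult_powr:
  fixes a b c :: real
  assumes "0 \<le> a" "0 \<le> b"
  shows "convex_on UNIV (\<lambda>x. a powr (c * x) * b powr (c * (1 - x)))"
proof (cases "a = 0 \<or> b = 0")
  case True
  then show ?thesis by (auto simp: convex_on_const)
next
  case False
  with assms have "a > 0" "b > 0" by auto
  define g where "g x = c * x * ln a + c * (1 - x) * ln b" for x
  have "(\<lambda>x. a powr (c * x) * b powr (c * (1 - x))) = (\<lambda>x. exp (g x))"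
    using \<open>a > 0\<close> \<open>b > 0\<close> by (simp add: fun_eq_iff g_def powr_def exp_add mult_ac)
  moreover have "convex_on UNIV (\<lambda>x. exp (g x))"
  proof (rule convex_onI)
    fix l x y :: real assume "0 < l" "l < 1"
    moreover have "g ((1 - l) *\<^sub>R x + l *\<^sub>R y) = (1 - l) * g x + l * g y"
      by (simp add: g_def algebra_simps)
    ultimately show "exp (g ((1 - l) *\<^sub>R x + l *\<^sub>R y)) \<le> (1 - l) * exp (g x) + l * exp (g y)"
      using convex_onD[OF exp_convex, of l "g x" "g y"] by simp
  qed simp
  ultimately show ?thesis
    by simp
qed

lemma powr_le_two_powr_abs:
  fixes s b :: real
  assumes "1/2 \<le> s" "s \<le> 2"
  shows "s powr b \<le> 2 powr \<bar>b\<bar>"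
proof -
  have "ln (1/2) \<le> ln s" "ln s \<le> ln 2"
    using assms by (subst ln_le_cancel_iff; simp)+
  then have "\<bar>ln s\<bar> \<le> ln 2"
    by (simp add: ln_div)
  then have "b * ln s \<le> \<bar>b\<bar> * ln 2"
    by (metis abs_ge_self abs_ge_zero abs_mult mult_left_mono order_trans)
  then show ?thesis
    using assms by (simp add: powr_def)
qed

lemma abs_powr_minus_tangent_le:
  fixes s a :: real
  assumes s: "1/2 \<le> s" "s \<le> 2"
  shows "\<bar>s powr a - 1 - a * (s - 1)\<bar> \<le> \<bar>a * (a - 1)\<bar> * 2 powr \<bar>a - 2\<bar> / 2 * (s - 1)^2"
proof (cases "s = 1")
  case False
  define D where "D m y = (if m = 0 then y powr a else if m = 1 then a * y powr (a - 1)
                            else a * (a - 1) * y powr (a - 2))" for m :: nat and y :: real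
  have D0: "D 0 = (\<lambda>y. y powr a)"
    by (simp add: D_def fun_eq_iff)
  have deriv: "DERIV (D m) y :> D (Suc m) y" if "m < 2" "1/2 \<le> y" for m y
  proof -
    have "y > 0" using that by simp
    consider "m = 0" | "m = 1" using \<open>m < 2\<close> by linarith
    then show ?thesis
    proof cases
      case 1
      with D0 show ?thesis
        using has_real_derivative_powr[OF \<open>y > 0\<close>, of a] by (simp add: D_def)
    next
      case 2
      have "D 1 = (\<lambda>y. a * y powr (a - 1))" by (simp add: D_def fun_eq_iff)
      moreover have "DERIV (\<lambda>y. a * y powr (a - 1)) y :> a * ((a - 1) * y powr (a - 1 - 1))"
        using \<open>y > 0\<close> by (intro DERIV_cmult has_real_derivative_powr)
      ultimately show ?thesis
        using 2 by (simp add: D_def algebra_simps)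
    qed
  qed
  obtain \<xi> where \<xi>: "if s < 1 then s < \<xi> \<and> \<xi> < 1 else 1 < \<xi> \<and> \<xi> < s"
    and taylor: "s powr a = (\<Sum>m<2. D m 1 / fact m * (s - 1)^m) + D 2 \<xi> / fact 2 * (s - 1)^2"
    using Taylor[of 2 D "\<lambda>y. y powr a" "1/2" 2 1 s] deriv D0 s False by auto
  have "\<bar>s powr a - 1 - a * (s - 1)\<bar> = \<bar>a * (a - 1)\<bar> * \<xi> powr (a - 2) / 2 * (s - 1)^2"
    using taylor by (simp add: D_def numeral_2_eq_2 abs_mult)
  also have "\<dots> \<le> \<bar>a * (a - 1)\<bar> * 2 powr \<bar>a - 2\<bar> / 2 * (s - 1)^2"
    using \<xi> s powr_le_two_powr_abs[of \<xi> "a - 2"]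
    by (intro mult_right_mono divide_right_mono mult_left_mono) (auto split: if_splits)
  finally show ?thesis .
qed simp

lemma power_eq_power_diff_mult:
  fixes x :: "'a::monoid_mult"
  assumes "k \<le> n"
  shows "x ^ n = x ^ (n - k) * x ^ k"
  using assms by (metis le_add_diff_inverse2 power_add)

lemma has_integral_power_mult_power_one_minus:
  "((\<lambda>t::real. t^p * (1 - t)^q) has_integral (fact p * fact q / fact (p + q + 1))) {0..1}"
proof -
  have "((\<lambda>t. t powr (real (p + 1) - 1) * (1 - t) powr (real (q + 1) - 1))
          has_integral Beta (real (p + 1)) (real (q + 1))) {0..1}"
    by (rule has_integral_Beta_real) auto
  moreover have "Beta (real (p + 1)) (real (q + 1)) = fact p * fact q / fact (p + q + 1)"
  proof -
    have "Gamma (real k + 1) = fact k" for k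
      using Gamma_fact[of k] by (simp add: add.commute)
    from this[of p] this[of q] this[of "p + q + 1"] show ?thesis
      unfolding Beta_altdef rGamma_inverse_Gamma by (simp add: field_simps add_ac)
  qed
  ultimately have "((\<lambda>t. t powr (real (p + 1) - 1) * (1 - t) powr (real (q + 1) - 1))
          has_integral (fact p * fact q / fact (p + q + 1))) {0..1}"
    by simp
  then show ?thesis
    by (rule has_integral_spike_finite[of "{0, 1}", rotated -1]) (auto simp: powr_realpow)
qed

lemma fact_mult_fact_le:
  assumes "c \<le> a" "c \<le> b"
  shows "fact a * fact b \<le> (fact c * fact (a + b - c) :: nat)"
proof -
  have "fact a * fact b \<le> (fact c * fact (a + b - c) :: nat)" if "c \<le> a" "a \<le> b" for a b
    using that
  proof (induction a arbitrary: b)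
    case (Suc a)
    show ?case
    proof (cases "c = Suc a")
      case False
      then have "c \<le> a" using Suc.prems by simp
      have "fact (Suc a) * fact b = Suc a * (fact a * fact b)"
        by (simp add: algebra_simps)
      also have "\<dots> \<le> Suc b * (fact a * fact b)"
        using Suc.prems by (intro mult_right_mono) auto
      also have "\<dots> = fact a * fact (Suc b)"
        by (simp add: algebra_simps)
      also have "\<dots> \<le> fact c * fact (a + Suc b - c)"
        using Suc.prems \<open>c \<le> a\<close> by (intro Suc.IH) auto
      finally show ?thesis by simp
    qed simp
  qed simp
  from this[of a b] this[of b a] assms show ?thesis
    by (cases "a \<le> b") (auto simp: add.commute mult.commute)
qed

lemma weighted_beta_term_le:
  assumes "j < L" "c \<le> j + 2" "c \<le> L + 1 - j"
  shows "real (L - j) * (fact (j + 2) * fact (L - j) / fact (L + 3))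
    \<le> fact c * fact (L + 3 - c) / fact (L + 3)"
proof -
  have "(L - j) * fact (L - j) \<le> (fact (Suc (L - j)) :: nat)"
    by simp
  then have "(L - j) * (fact (j + 2) * fact (L - j)) \<le> fact (j + 2) * fact (Suc (L - j))"
    using mult_le_mono2[of _ _ "fact (j + 2)"] by (simp add: mult.left_commute)
  also have "\<dots> \<le> fact c * fact (j + 2 + Suc (L - j) - c)"
    using assms by (intro fact_mult_fact_le) auto
  also have "j + 2 + Suc (L - j) - c = L + 3 - c"
    using assms by simp
  finally have "real ((L - j) * (fact (j + 2) * fact (L - j))) \<le> real (fact c * fact (L + 3 - c))"
    by (rule of_nat_mono)
  then have "real (L - j) * (fact (j + 2) * fact (L - j)) \<le> (fact c * fact (L + 3 - c) :: real)"
    by (simp only: of_nat_mult of_nat_fact)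
  from divide_right_mono[OF this fact_ge_zero] show ?thesis
    by (simp only: times_divide_eq_right)
qed

lemma weighted_beta_sum_le:
  assumes "L \<ge> 1"
  shows "(\<Sum>j<L. real (L - j) * (fact (j + 2) * fact (L - j) / fact (L + 3)))
    \<le> 2 * (2 / ((real L + 3) * (real L + 2)))
      + (real L - 1) * (6 / ((real L + 3) * (real L + 2) * (real L + 1)))"
proof -
  define f where "f j = real (L - j) * (fact (j + 2) * fact (L - j) / fact (L + 3))" for j
  define D2 where "D2 = (fact 2 * fact (L + 1) / fact (L + 3) :: real)"
  define D3 where "D3 = (fact 3 * fact L / fact (L + 3) :: real)"
  have "(fact (L + 3) :: real) = (real L + 3) * (real L + 2) * fact (L + 1)"
    "(fact (L + 1) :: real) = (real L + 1) * fact L"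
    by (simp_all add: numeral_3_eq_3 numeral_2_eq_2 algebra_simps)
  then have D2_eq: "D2 = 2 / ((real L + 3) * (real L + 2))"
    and D3_eq: "D3 = 6 / ((real L + 3) * (real L + 2) * (real L + 1))"
    unfolding D2_def D3_def by (simp_all add: fact_numeral)
  have "D2 \<ge> 0"
    by (simp add: D2_def)
  have D2: "f j \<le> D2" if "j < L" for j
    using weighted_beta_term_le[of j L 2] that by (simp add: f_def D2_def)
  have D3: "f j \<le> D3" if "1 \<le> j" "j + 2 \<le> L" for j
    using weighted_beta_term_le[of j L 3] that by (simp add: f_def D3_def)
  obtain K where L: "L = Suc K"
    using assms by (cases L) auto
  have "(\<Sum>j<L. f j) = f 0 + (\<Sum>j<K. f (Suc j))"
    unfolding L by (rule sum.lessThan_Suc_shift)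
  also have "\<dots> \<le> D2 + (\<Sum>j<K. D3 + (if j = K - 1 then D2 else 0))"
  proof (intro add_mono sum_mono)
    show "f 0 \<le> D2" using D2 L by simp
    fix j assume "j \<in> {..<K}"
    then show "f (Suc j) \<le> D3 + (if j = K - 1 then D2 else 0)"
      using D2[of "Suc j"] D3[of "Suc j"] L
      by (cases "j = K - 1") (auto simp: D3_def intro: add_increasing)
  qed
  also have "\<dots> = D2 + (real K * D3 + (if K - 1 < K then D2 else 0))"
    by (simp add: sum.distrib)
  also have "\<dots> \<le> 2 * D2 + (real L - 1) * D3"
    using \<open>D2 \<ge> 0\<close> L by (simp add: algebra_simps)
  finally show ?thesis
    by (simp only: f_def D2_eq D3_eq)
qed

section \<open>Convexity of \<open>\<Phi>\<^sub>n\<close>\<close>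

definition Phi_numerator :: "nat \<Rightarrow> real \<Rightarrow> real \<Rightarrow> real" where
  "Phi_numerator n x t =
     (real n * x - 3) * t^2 * (1 - t)^(n - 2) - (real n * x - 2) * t^3 * (1 - t)^(n - 3)
     + t powr (real n * x) * (1 - t) powr (real n * (1 - x))"

definition Phi_integrand :: "nat \<Rightarrow> real \<Rightarrow> real \<Rightarrow> real" where
  "Phi_integrand n x t = (t^2 + (1 - t)^2) * (Phi_numerator n x t / (1 - 2 * t)^2)"

lemma Phi_eq_integral: "Phi n x = (real n + 1) * integral {0..1} (Phi_integrand n x)"
  unfolding Phi_def Phi_integrand_def Phi_numerator_def ..

lemma convex_on_Phi_numerator:
  assumes "0 \<le> t" "t \<le> 1"
  shows "convex_on UNIV (\<lambda>x. Phi_numerator n x t)"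
proof -
  define p where "p = t^2 * (1 - t)^(n - 2)"
  define q where "q = t^3 * (1 - t)^(n - 3)"
  have affine: "convex_on UNIV (\<lambda>x. x * (real n * (p - q)) + (2 * q - 3 * p))"
    by (rule convex_onI) (auto simp: algebra_simps)
  have "(\<lambda>x. Phi_numerator n x t) = (\<lambda>x. (x * (real n * (p - q)) + (2 * q - 3 * p))
          + t powr (real n * x) * (1 - t) powr (real n * (1 - x)))"
    by (auto simp: fun_eq_iff Phi_numerator_def p_def q_def algebra_simps)
  then show ?thesis
    using affine convex_on_powr_mult_powr[of t "1 - t" "real n"] assms by auto
qed

lemma convex_on_Phi_integrand:
  assumes "0 \<le> t" "t \<le> 1"
  shows "convex_on UNIV (\<lambda>x. Phi_integrand n x t)"
proof -
  have "(\<lambda>x. Phi_integrand n x t)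
          = (\<lambda>x. (t^2 + (1 - t)^2) / (1 - 2 * t)^2 * Phi_numerator n x t)"
    by (simp add: fun_eq_iff Phi_integrand_def)
  then show ?thesis
    using assms by (simp only:) (intro convex_on_cmul convex_on_Phi_numerator; simp)
qed

lemma abs_Phi_numerator_le:
  assumes "0 \<le> x" "x \<le> 1" "0 \<le> t" "t \<le> 1"
  shows "\<bar>Phi_numerator n x t\<bar> \<le> 2 * real n + 6"
proof -
  define p where "p = t^2 * (1 - t)^(n - 2)"
  define q where "q = t^3 * (1 - t)^(n - 3)"
  define E where "E = t powr (real n * x) * (1 - t) powr (real n * (1 - x))"
  have nx: "0 \<le> real n * x" "real n * x \<le> real n"
    using assms by (auto simp: mult_left_le)
  have "0 \<le> p" "p \<le> 1" "0 \<le> q" "q \<le> 1"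
    using assms by (auto simp: p_def q_def intro!: mult_le_one power_le_one)
  have "0 \<le> E" "E \<le> 1"
    using assms nx by (auto simp: E_def intro!: mult_le_one powr_le1)
  have triangle: "\<bar>a - b + c\<bar> \<le> a' + b' + c'" if "\<bar>a\<bar> \<le> a'" "\<bar>b\<bar> \<le> b'" "\<bar>c\<bar> \<le> c'"
    for a b c a' b' c' :: real
    using that by linarith
  have "\<bar>(real n * x - 3) * p - (real n * x - 2) * q + E\<bar> \<le> (real n + 3) + (real n + 2) + 1"
  proof (rule triangle)
    have "\<bar>real n * x - 3\<bar> * \<bar>p\<bar> \<le> (real n + 3) * 1"
      using nx \<open>0 \<le> p\<close> \<open>p \<le> 1\<close> by (intro mult_mono) auto
    then show "\<bar>(real n * x - 3) * p\<bar> \<le> real n + 3"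
      by (simp add: abs_mult)
    have "\<bar>real n * x - 2\<bar> * \<bar>q\<bar> \<le> (real n + 2) * 1"
      using nx \<open>0 \<le> q\<close> \<open>q \<le> 1\<close> by (intro mult_mono) auto
    then show "\<bar>(real n * x - 2) * q\<bar> \<le> real n + 2"
      by (simp add: abs_mult)
    show "\<bar>E\<bar> \<le> 1"
      using \<open>0 \<le> E\<close> \<open>E \<le> 1\<close> by simp
  qed
  moreover have "Phi_numerator n x t = (real n * x - 3) * p - (real n * x - 2) * q + E"
    by (simp add: Phi_numerator_def p_def q_def E_def mult.assoc)
  ultimately show ?thesis
    by simp
qed

lemma Phi_numerator_ratio_form:
  assumes "n \<ge> 3" "0 < t" "t < 1"
  defines "s \<equiv> t / (1 - t)"
  shows "Phi_numerator n x t
    = (1 - t)^n * s^2 * (s powr (real n * x - 2) - 1 - (real n * x - 2) * (s - 1))"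
proof -
  define u where "u = 1 - t"
  have "u > 0" "s > 0" and t: "t = s * u"
    using assms by (auto simp: s_def u_def)
  have "t powr (real n * x) = s powr (real n * x) * u powr (real n * x)"
    using \<open>u > 0\<close> \<open>s > 0\<close> by (simp add: t powr_mult)
  moreover have "s powr (real n * x) = s powr 2 * s powr (real n * x - 2)"
    by (simp flip: powr_add)
  then have "s powr (real n * x) = s^2 * s powr (real n * x - 2)"
    using \<open>s > 0\<close> by simp
  moreover have "u powr (real n * x) * u powr (real n * (1 - x)) = u^n"
    using \<open>u > 0\<close> by (simp add: powr_add[symmetric] powr_realpow algebra_simps)
  moreover have "t^2 * u^(n - 2) = u^n * s^2"
    using power_eq_power_diff_mult[of 2 n u] \<open>n \<ge> 3\<close> unfolding t
    by (simp add: power_mult_distrib mult_ac)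
  moreover have "t^3 * u^(n - 3) = u^n * s^3"
    unfolding t power_eq_power_diff_mult[of 3 n u, OF \<open>n \<ge> 3\<close>]
    by (simp add: power_mult_distrib algebra_simps)
  ultimately show ?thesis
    unfolding Phi_numerator_def u_def[symmetric] mult.assoc
    by (simp add: algebra_simps power2_eq_square power3_eq_cube)
qed

lemma abs_Phi_numerator_le_near_half:
  fixes x t :: real
  assumes "n \<ge> 3" "1/3 < t" "t < 2/3"
  defines "a \<equiv> real n * x - 2"
  shows "\<bar>Phi_numerator n x t\<bar> \<le> 2 * \<bar>a * (a - 1)\<bar> * 2 powr \<bar>a - 2\<bar> * (1 - 2 * t)^2"
proof -
  define C where "C = \<bar>a * (a - 1)\<bar> * 2 powr \<bar>a - 2\<bar> / 2"
  define u where "u = 1 - t"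
  define s where "s = t / u"
  have "C \<ge> 0" "u > 0" "1/2 \<le> s" "s \<le> 2"
    using assms(2,3) by (auto simp: C_def s_def u_def field_simps)
  have "u * (s - 1) = 2 * t - 1"
    using \<open>u > 0\<close> by (simp add: s_def u_def field_simps)
  have "\<bar>Phi_numerator n x t\<bar> = u^n * s^2 * \<bar>s powr a - 1 - a * (s - 1)\<bar>"
    using Phi_numerator_ratio_form[OF \<open>n \<ge> 3\<close>, of t x] assms(2,3) \<open>u > 0\<close>
    by (simp add: a_def s_def u_def abs_mult)
  also have "\<dots> \<le> u^n * s^2 * (C * (s - 1)^2)"
    using abs_powr_minus_tangent_le[OF \<open>1/2 \<le> s\<close> \<open>s \<le> 2\<close>, of a] \<open>u > 0\<close>
    by (intro mult_left_mono) (simp_all add: C_def)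
  also have "\<dots> = u^(n - 2) * s^2 * C * (u * (s - 1))^2"
    using power_eq_power_diff_mult[of 2 n u] \<open>n \<ge> 3\<close> by (simp add: power_mult_distrib)
  also have "\<dots> \<le> 1 * 4 * C * (1 - 2 * t)^2"
    using \<open>u > 0\<close> \<open>1/2 \<le> s\<close> \<open>s \<le> 2\<close> \<open>C \<ge> 0\<close> \<open>u * (s - 1) = 2 * t - 1\<close> assms(2,3)
    by (intro mult_right_mono mult_mono)
      (auto simp: u_def power_le_one power2_commute intro!: power_mono[of s 2 2, simplified])
  also have "\<dots> = 2 * \<bar>a * (a - 1)\<bar> * 2 powr \<bar>a - 2\<bar> * (1 - 2 * t)^2"
    by (simp add: C_def)
  finally show ?thesis .
qed

lemma Phi_numerator_le_square:
  assumes "n \<ge> 3" "0 \<le> x" "x \<le> 1"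
  shows "\<exists>K. \<forall>t \<in> {0..1}. \<bar>Phi_numerator n x t\<bar> \<le> K * (1 - 2 * t)^2"
proof -
  define a where "a = real n * x - 2"
  define C where "C = 2 * \<bar>a * (a - 1)\<bar> * 2 powr \<bar>a - 2\<bar>"
  have "C \<ge> 0" by (simp add: C_def)
  have bound: "\<bar>Phi_numerator n x t\<bar> \<le> (9 * (2 * real n + 6) + C) * (1 - 2 * t)^2"
    if t: "0 \<le> t" "t \<le> 1" for t
  proof (cases "\<bar>1 - 2 * t\<bar> \<ge> 1/3")
    case True
    then have "1 \<le> 9 * (1 - 2 * t)^2"
      using power_mono[OF True, of 2] by (simp add: power2_eq_square)
    then have "(2 * real n + 6) * 1 \<le> (2 * real n + 6) * (9 * (1 - 2 * t)^2)"
      by (intro mult_left_mono) auto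
    also have "\<dots> = 9 * (2 * real n + 6) * (1 - 2 * t)^2"
      by (simp add: algebra_simps)
    also have "\<dots> \<le> (9 * (2 * real n + 6) + C) * (1 - 2 * t)^2"
      using \<open>C \<ge> 0\<close> by (intro mult_right_mono) auto
    finally have "2 * real n + 6 \<le> (9 * (2 * real n + 6) + C) * (1 - 2 * t)^2"
      by simp
    then show ?thesis
      using abs_Phi_numerator_le[OF assms(2,3) t, where n = n] by linarith
  next
    case False
    then have "1/3 < t" "t < 2/3"
      by (auto simp: abs_real_def split: if_splits)
    then have "\<bar>Phi_numerator n x t\<bar> \<le> C * (1 - 2 * t)^2"
      unfolding C_def a_def by (rule abs_Phi_numerator_le_near_half[OF \<open>n \<ge> 3\<close>])
    also have "\<dots> \<le> (9 * (2 * real n + 6) + C) * (1 - 2 * t)^2"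
      by (intro mult_right_mono) auto
    finally show ?thesis .
  qed
  show ?thesis
    by (rule exI[where x = "9 * (2 * real n + 6) + C"]) (use bound in auto)
qed

lemma Phi_integrand_integrable:
  assumes "n \<ge> 3" "0 \<le> x" "x \<le> 1"
  shows "Phi_integrand n x integrable_on {0..1}"
proof -
  obtain K where K: "\<And>t. t \<in> {0..1} \<Longrightarrow> \<bar>Phi_numerator n x t\<bar> \<le> K * (1 - 2 * t)^2"
    using Phi_numerator_le_square[OF assms] by blast
  have "K \<ge> 0"
    using K[of 0] by simp
  have bounded: "\<bar>Phi_integrand n x t\<bar> \<le> K" if t: "t \<in> {0..1}" for t
  proof -
    \<comment> \<open>\<open>d = 0\<close> happens at \<open>t = 1/2\<close>, where the integrand is \<open>0\<close> because \<open>x / 0 = 0\<close>\<close>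
    have "a / d \<le> K" if "a \<le> K * d" "0 \<le> d" for a d :: real
      using that \<open>K \<ge> 0\<close> by (cases "d = 0") (simp_all add: pos_divide_le_eq)
    from this[OF K[OF t] zero_le_power2]
    have "\<bar>Phi_numerator n x t\<bar> / (1 - 2 * t)^2 \<le> K" .
    moreover have "t^2 + (1 - t)^2 = 1 - 2 * t * (1 - t)"
      by (simp add: power2_eq_square algebra_simps)
    then have "t^2 + (1 - t)^2 \<le> 1"
      using t by simp
    ultimately have "(t^2 + (1 - t)^2) * (\<bar>Phi_numerator n x t\<bar> / (1 - 2 * t)^2) \<le> 1 * K"
      by (intro mult_mono) auto
    then show ?thesis
      by (simp add: Phi_integrand_def abs_mult)
  qed
  have "Phi_integrand n x \<in> borel_measurable borel"
    unfolding Phi_integrand_def Phi_numerator_def by measurable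
  then have "Phi_integrand n x \<in> borel_measurable (lebesgue_on {0..1})"
    by (simp add: measurable_completion measurable_restrict_space1)
  from measurable_bounded_by_integrable_imp_integrable_real[OF this _ bounded]
  show ?thesis
    by (simp add: Henstock_Kurzweil_Integration.integrable_const_ivl)
qed

lemma convex_on_Phi:
  assumes "n \<ge> 3"
  shows "convex_on {0..1} (Phi n)"
proof -
  have "convex_on {0..1} (\<lambda>x. integral {0..1} (Phi_integrand n x))"
    using assms
    by (intro convex_on_integral convex_on_subset[OF convex_on_Phi_integrand]
          Phi_integrand_integrable) auto
  then have "convex_on {0..1} (\<lambda>x. (real n + 1) * integral {0..1} (Phi_integrand n x))"
    by (intro convex_on_cmul) auto
  then show ?thesis
    by (simp add: Phi_eq_integral[abs_def])
qed

section \<open>Values at the nodes \<open>k/n\<close>\<close>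

lemma Phi_numerator_at_node:
  assumes "k \<le> n" "0 < t" "t < 1"
  shows "Phi_numerator n (real k / real n) t
    = (real k - 3) * t^2 * (1 - t)^(n - 2) - (real k - 2) * t^3 * (1 - t)^(n - 3)
      + t^k * (1 - t)^(n - k)"
proof -
  have "real n * (real k / real n) = real k" "real n * (1 - real k / real n) = real (n - k)"
    using assms by (cases "n = 0"; simp add: of_nat_diff field_simps)+
  moreover have "t powr real k = t^k" "(1 - t) powr real (n - k) = (1 - t)^(n - k)"
    using assms by (intro powr_realpow; simp)+
  ultimately show ?thesis
    by (simp only: Phi_numerator_def)
qed

lemma integral_Phi_integrand_eq:
  fixes g :: "real \<Rightarrow> real"
  assumes "\<And>t. 0 < t \<Longrightarrow> t < 1 \<Longrightarrow> Phi_numerator n x t = (1 - 2 * t)^2 * g t"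
  shows "integral {0..1} (Phi_integrand n x) = integral {0..1} (\<lambda>t. (t^2 + (1 - t)^2) * g t)"
proof (rule integral_spike[of "{0, 1/2, 1}"])
  fix t :: real
  assume "t \<in> {0..1} - {0, 1/2, 1}"
  then have "0 < t" "t < 1" "(1 - 2 * t)^2 \<noteq> 0"
    by auto
  then show "(t^2 + (1 - t)^2) * g t = Phi_integrand n x t"
    using assms by (simp add: Phi_integrand_def)
qed (rule negligible_finite, simp)

lemma Phi_two_div_n: "n \<ge> 3 \<Longrightarrow> Phi n (2 / real n) = 0"
  and Phi_three_div_n: "n \<ge> 3 \<Longrightarrow> Phi n (3 / real n) = 0"
proof -
  assume "n \<ge> 3"
  have "Phi_numerator n (2 / real n) t = (1 - 2 * t)^2 * 0"
    and "Phi_numerator n (3 / real n) t = (1 - 2 * t)^2 * 0" if "0 < t" "t < 1" for t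
    using Phi_numerator_at_node[of 2 n t] Phi_numerator_at_node[of 3 n t] \<open>n \<ge> 3\<close> that
    by simp_all
  then show "Phi n (2 / real n) = 0" "Phi n (3 / real n) = 0"
    unfolding Phi_eq_integral by (simp_all add: integral_Phi_integrand_eq[of _ _ "\<lambda>_. 0"])
qed

lemma Phi_one_div_n:
  assumes "n \<ge> 3"
  shows "Phi n (1 / real n) = 1 / real n + 6 / (real n * (real n - 1) * (real n - 2))"
proof -
  define m where "m = n - 3"
  have n: "n = Suc (Suc (Suc m))"
    using assms by (simp add: m_def)
  have numerator: "Phi_numerator n (1 / real n) t = (1 - 2 * t)^2 * (t * (1 - t)^m)"
    if "0 < t" "t < 1" for t
    using Phi_numerator_at_node[of 1 n t] that
    by (simp add: n power2_eq_square power3_eq_cube algebra_simps)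
  have expand: "(t^2 + (1 - t)^2) * (t * (1 - t)^m) = t^3 * (1 - t)^m + t^1 * (1 - t)^(m + 2)"
    for t :: real
    by (simp add: power_add power2_eq_square power3_eq_cube algebra_simps)
  have "((\<lambda>t::real. (t^2 + (1 - t)^2) * (t * (1 - t)^m)) has_integral
      fact 3 * fact m / fact (3 + m + 1) + fact 1 * fact (m + 2) / fact (1 + (m + 2) + 1)) {0..1}"
    unfolding expand by (intro has_integral_add has_integral_power_mult_power_one_minus)
  then have "integral {0..1} (Phi_integrand n (1 / real n))
      = fact 3 * fact m / fact (3 + m + 1) + fact 1 * fact (m + 2) / fact (1 + (m + 2) + 1)"
    by (subst integral_Phi_integrand_eq[OF numerator]) (auto intro: integral_unique)
  also have "\<dots> = 6 / ((real m + 4) * (real m + 3) * (real m + 2) * (real m + 1))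
      + 1 / ((real m + 4) * (real m + 3))"
  proof -
    have "(fact (3 + m + 1) :: real) = (real m + 4) * (real m + 3) * (real m + 2) * (real m + 1) * fact m"
      "(fact (1 + (m + 2) + 1) :: real) = (real m + 4) * (real m + 3) * (real m + 2) * (real m + 1) * fact m"
      "(fact (m + 2) :: real) = (real m + 2) * (real m + 1) * fact m"
      by (simp_all add: fact_Suc numeral_3_eq_3 numeral_2_eq_2 algebra_simps)
    then show ?thesis
      by (simp add: fact_numeral)
  qed
  finally have integral: "integral {0..1} (Phi_integrand n (1 / real n)) = \<dots>" .
  have "e * (6 / (e * c * b * a) + 1 / (e * c)) = 1 / c + 6 / (c * b * a)"
    if "a > 0" "b > 0" "c > 0" "e > 0" for a b c e :: real
    using that by (simp add: field_simps)
  moreover have "real n + 1 = real m + 4" "real n - 1 = real m + 2" "real n - 2 = real m + 1"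
    and "real n = real m + 3"
    by (simp_all add: n)
  ultimately show ?thesis
    unfolding Phi_eq_integral integral by (simp only:)
qed

lemma Phi_one_div_n_nonneg: "n \<ge> 3 \<Longrightarrow> 0 \<le> Phi n (1 / real n)"
  and Phi_one_div_n_le: "n \<ge> 3 \<Longrightarrow> Phi n (1 / real n) \<le> 4 / real n"
proof -
  assume "n \<ge> 3"
  then have n: "real n \<ge> 3"
    by simp
  then have pos: "real n * (real n - 1) * (real n - 2) > 0"
    by simp
  then show "0 \<le> Phi n (1 / real n)"
    unfolding Phi_one_div_n[OF \<open>n \<ge> 3\<close>] using n by simp
  have "2 * 1 \<le> (real n - 1) * (real n - 2)"
    using n by (intro mult_mono) auto
  then have "6 / (real n * (real n - 1) * (real n - 2)) \<le> 3 / real n"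
    using n pos by (simp add: field_simps)
  then show "Phi n (1 / real n) \<le> 4 / real n"
    unfolding Phi_one_div_n[OF \<open>n \<ge> 3\<close>] by simp
qed

text \<open>The numerator at the top node \<open>x = (n - 1)/n\<close>, \<open>n = L + 4\<close>, divided by \<open>(1 - 2t)\<^sup>2\<close>.\<close>

definition top_node_quotient :: "nat \<Rightarrow> 'a::comm_ring_1 \<Rightarrow> 'a \<Rightarrow> 'a" where
  "top_node_quotient L t u = (\<Sum>j<L. of_nat (L - j) * t^(j + 2) * u^(L - j))"

lemma top_node_quotient_mult_square:
  "(u - t)^2 * top_node_quotient L t u
     = of_nat L * t^2 * u^(L + 2) - of_nat (L + 1) * t^3 * u^(L + 1) + t^(L + 3) * u"
proof (induction L)
  case 0
  show ?case by (simp add: top_node_quotient_def power3_eq_cube)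
next
  case (Suc L)
  have "top_node_quotient (Suc L) t u = of_nat (Suc L) * t^2 * u^(Suc L) + t * top_node_quotient L t u"
    unfolding top_node_quotient_def
    by (subst sum.lessThan_Suc_shift) (simp add: sum_distrib_left mult_ac power2_eq_square)
  then have "(u - t)^2 * top_node_quotient (Suc L) t u
      = of_nat (Suc L) * t^2 * u^(Suc L) * (u - t)^2 + t * ((u - t)^2 * top_node_quotient L t u)"
    by (simp add: algebra_simps)
  also have "\<dots> = of_nat (Suc L) * t^2 * u^(Suc L + 2) - of_nat (Suc L + 1) * t^3 * u^(Suc L + 1)
      + t^(Suc L + 3) * u"
    unfolding Suc.IH by (simp add: power_add algebra_simps power2_eq_square power3_eq_cube power4_eq_xxxx)
  finally show ?case .
qed

lemma has_integral_top_node_quotient: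
  "((\<lambda>t::real. top_node_quotient L t (1 - t)) has_integral
      (\<Sum>j<L. real (L - j) * (fact (j + 2) * fact (L - j) / fact (L + 3)))) {0..1}"
  unfolding top_node_quotient_def
proof (intro has_integral_sum)
  fix j assume "j \<in> {..<L}"
  then have "j + 2 + (L - j) + 1 = L + 3"
    by simp
  then have "((\<lambda>t. real (L - j) * (t^(j + 2) * (1 - t)^(L - j))) has_integral
      real (L - j) * (fact (j + 2) * fact (L - j) / fact (L + 3))) {0..1}"
    using has_integral_mult_right[OF has_integral_power_mult_power_one_minus[of "j + 2" "L - j"]]
    by metis
  then show "((\<lambda>t. real (L - j) * t^(j + 2) * (1 - t)^(L - j)) has_integral
      real (L - j) * (fact (j + 2) * fact (L - j) / fact (L + 3))) {0..1}"
    by (simp only: mult.assoc)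
qed simp

lemma top_node_quotient_nonneg:
  "0 \<le> t \<Longrightarrow> 0 \<le> u \<Longrightarrow> 0 \<le> top_node_quotient L t (u::real)"
  unfolding top_node_quotient_def by (intro sum_nonneg) auto

lemma Phi_top_node_le_beta_sum:
  assumes n: "n = L + 4"
  shows "Phi n (1 - 1 / real n)
    \<le> (real L + 5) * (\<Sum>j<L. real (L - j) * (fact (j + 2) * fact (L - j) / fact (L + 3)))"
proof -
  have node: "1 - 1 / real n = real (L + 3) / real n"
    using n by (simp add: field_simps)
  have numerator: "Phi_numerator n (1 - 1 / real n) t = (1 - 2 * t)^2 * top_node_quotient L t (1 - t)"
    if "0 < t" "t < 1" for t
  proof -
    have "Phi_numerator n (1 - 1 / real n) t
        = real L * t^2 * (1 - t)^(L + 2) - real (L + 1) * t^3 * (1 - t)^(L + 1) + t^(L + 3) * (1 - t)"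
      unfolding node using Phi_numerator_at_node[of "L + 3" n t] that n by simp
    also have "\<dots> = ((1 - t) - t)^2 * top_node_quotient L t (1 - t)"
      by (rule top_node_quotient_mult_square[symmetric])
    also have "(1 - t) - t = 1 - 2 * t"
      by simp
    finally show ?thesis .
  qed
  have weight_le: "integral {0..1} (\<lambda>t::real. (t^2 + (1 - t)^2) * top_node_quotient L t (1 - t))
      \<le> integral {0..1} (\<lambda>t. top_node_quotient L t (1 - t))"
  proof (rule integral_le)
    show "(\<lambda>t::real. (t^2 + (1 - t)^2) * top_node_quotient L t (1 - t)) integrable_on {0..1}"
      unfolding top_node_quotient_def by (intro integrable_continuous_interval continuous_intros)
    show "(\<lambda>t::real. top_node_quotient L t (1 - t)) integrable_on {0..1}"
      unfolding top_node_quotient_def by (intro integrable_continuous_interval continuous_intros)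
  next
    fix t :: real assume t: "t \<in> {0..1}"
    have "t^2 + (1 - t)^2 = 1 - 2 * t * (1 - t)"
      by (simp add: power2_eq_square algebra_simps)
    then have "t^2 + (1 - t)^2 \<le> 1"
      using t by simp
    moreover have "0 \<le> top_node_quotient L t (1 - t)"
      using t by (intro top_node_quotient_nonneg) auto
    ultimately show "(t^2 + (1 - t)^2) * top_node_quotient L t (1 - t) \<le> top_node_quotient L t (1 - t)"
      by (simp add: mult_left_le_one_le)
  qed
  have "Phi n (1 - 1 / real n)
      = (real L + 5) * integral {0..1} (\<lambda>t. (t^2 + (1 - t)^2) * top_node_quotient L t (1 - t))"
    unfolding Phi_eq_integral by (subst integral_Phi_integrand_eq[OF numerator]) (simp_all add: n)
  also have "\<dots> \<le> (real L + 5) * integral {0..1} (\<lambda>t. top_node_quotient L t (1 - t))"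
    using weight_le by (intro mult_left_mono) auto
  also have "integral {0..1} (\<lambda>t. top_node_quotient L t (1 - t))
      = (\<Sum>j<L. real (L - j) * (fact (j + 2) * fact (L - j) / fact (L + 3)))"
    by (rule integral_unique[OF has_integral_top_node_quotient])
  finally show ?thesis .
qed

lemma top_node_rational_inequality:
  fixes r :: real
  assumes "1 \<le> r"
  shows "(r + 5) * (2 * (2 / ((r + 3) * (r + 2))) + (r - 1) * (6 / ((r + 3) * (r + 2) * (r + 1))))
    \<le> 16 / (r + 4)"
proof -
  have combine: "2 * (2 / (c * b)) + x * (6 / (c * b * a)) = (4 * a + 6 * x) / (c * b * a)"
    if "a > 0" "b > 0" "c > 0" for a b c x :: real
    using that by (simp add: field_simps)
  have cross: "x * (y / d) \<le> z / e" if "x * y * e \<le> z * d" "d > 0" "e > 0" for x y z d e :: real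
    using that by (simp add: field_simps)
  have "r * 1 * 1 \<le> r * r * r"
    using assms by (intro mult_mono) auto
  moreover have "16 * ((r + 3) * (r + 2) * (r + 1)) - (r + 5) * (4 * (r + 1) + 6 * (r - 1)) * (r + 4)
      = 6 * (r * r * r) + 8 * (r * r) - 6 * r + 136"
    by (simp add: algebra_simps)
  moreover have "0 \<le> r * r"
    by simp
  ultimately have "(r + 5) * (4 * (r + 1) + 6 * (r - 1)) * (r + 4) \<le> 16 * ((r + 3) * (r + 2) * (r + 1))"
    by linarith
  then have "(r + 5) * ((4 * (r + 1) + 6 * (r - 1)) / ((r + 3) * (r + 2) * (r + 1))) \<le> 16 / (r + 4)"
    using assms by (intro cross) auto
  then show ?thesis
    using assms by (subst combine) auto
qed

lemma Phi_top_node_le_16_div_n: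
  assumes "n \<ge> 3"
  shows "Phi n (1 - 1 / real n) \<le> 16 / real n"
proof -
  consider "n = 3" | "n = 4" | "n \<ge> 5"
    using assms by linarith
  then show ?thesis
  proof cases
    case 1
    then have "1 - 1 / real n = 2 / real n"
      by simp
    then show ?thesis
      using Phi_two_div_n[of n] 1 by simp
  next
    case 2
    then have "1 - 1 / real n = 3 / real n"
      by simp
    then show ?thesis
      using Phi_three_div_n[of n] 2 by simp
  next
    case 3
    define L where "L = n - 4"
    have n: "n = L + 4" and "L \<ge> 1"
      using 3 by (simp_all add: L_def)
    have "Phi n (1 - 1 / real n)
        \<le> (real L + 5) * (\<Sum>j<L. real (L - j) * (fact (j + 2) * fact (L - j) / fact (L + 3)))"
      by (rule Phi_top_node_le_beta_sum[OF n])
    also have "\<dots> \<le> (real L + 5) * (2 * (2 / ((real L + 3) * (real L + 2)))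
        + (real L - 1) * (6 / ((real L + 3) * (real L + 2) * (real L + 1))))"
      using \<open>L \<ge> 1\<close> by (intro mult_left_mono weighted_beta_sum_le) auto
    also have "\<dots> \<le> 16 / (real L + 4)"
      using \<open>L \<ge> 1\<close> by (intro top_node_rational_inequality) simp
    also have "real L + 4 = real n"
      using n by simp
    finally show ?thesis .
  qed
qed

section \<open>Bounds on \<open>[1/n, 1 - 1/n]\<close>\<close>

lemma Phi_upper_bound:
  assumes "n \<ge> 3" "x \<in> {1 / real n .. 1 - 1 / real n}"
  shows "Phi n x \<le> 16 / real n"
proof -
  have "1 / real n \<le> 1 - 1 / real n" "0 \<le> 1 / real n"
    using assms by (auto simp: field_simps)
  then have "convex_on {1 / real n .. 1 - 1 / real n} (Phi n)"
    by (intro convex_on_subset[OF convex_on_Phi[OF assms(1)]]) auto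
  then have "Phi n x \<le> max (Phi n (1 / real n)) (Phi n (1 - 1 / real n))"
    using assms(2) by (rule convex_on_le_max)
  moreover have "4 / real n \<le> 16 / real n"
    by (simp add: divide_right_mono)
  then have "Phi n (1 / real n) \<le> 16 / real n"
    using Phi_one_div_n_le[OF assms(1)] by linarith
  ultimately show ?thesis
    using Phi_top_node_le_16_div_n[OF assms(1)] by simp
qed

lemma Phi_lower_bound:
  assumes "n \<ge> 3" "x \<in> {1 / real n .. 1 - 1 / real n}"
  shows "- 4 / real n \<le> Phi n x"
proof -
  let ?a = "1 / real n" and ?b = "2 / real n" and ?c = "3 / real n"
  have n: "real n \<ge> 3"
    using assms by simp
  have convex: "convex_on {0..1} (Phi n)"
    using convex_on_Phi[OF assms(1)] .
  have nodes: "?a \<in> {0..1}" "?b \<in> {0..1}" "?c \<in> {0..1}" "?a < ?b" "?b < ?c"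
    using n by (auto simp: field_simps)
  have "0 < 1 / real n" "1 / real n \<le> x" "x \<le> 1 - 1 / real n"
    using n assms(2) by auto
  then have x: "x \<in> {0..1}"
    unfolding atLeastAtMost_iff by linarith
  consider "x \<notin> {?b<..<?c}" | "?b < x" "x < ?c"
    by auto
  then show ?thesis
  proof cases
    case 1
    from convex_on_secant_le_outside[OF convex nodes(2,3) x(1) nodes(5) 1]
    have "0 \<le> Phi n x"
      using Phi_two_div_n[OF assms(1)] Phi_three_div_n[OF assms(1)] by simp
    then show ?thesis
      using n by (simp add: divide_nonneg_nonneg order_trans[of _ 0])
  next
    case 2
    then have outside: "x \<notin> {?a<..<?b}" and "real n * x \<le> 3"
      using n by (auto simp: field_simps)
    have secant: "Phi n ?a + (Phi n ?b - Phi n ?a) / (?b - ?a) * (x - ?a) = Phi n ?a * (2 - real n * x)"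
      using Phi_two_div_n[OF assms(1)] n by (simp add: field_simps)
    from convex_on_secant_le_outside[OF convex nodes(1,2) x(1) nodes(4) outside]
    have "Phi n ?a * (2 - real n * x) \<le> Phi n x"
      unfolding secant .
    moreover have "Phi n ?a * (- 1) \<le> Phi n ?a * (2 - real n * x)"
      using Phi_one_div_n_nonneg[OF assms(1)] \<open>real n * x \<le> 3\<close> by (intro mult_left_mono) auto
    ultimately show ?thesis
      using Phi_one_div_n_le[OF assms(1)] by simp
  qed
qed

theorem proposition3p4:
  fixes n :: nat
  assumes "n \<ge> 3"
  shows "convex_on {0..1} (Phi n)
    \<and> (\<forall>x \<in> {1 / real n .. 1 - 1 / real n}. - 4 / real n \<le> Phi n x \<and> Phi n x \<le> 16 / real n)"
proof (intro conjI ballI)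
  show "convex_on {0..1} (Phi n)"
    using assms by (rule convex_on_Phi)
  fix x
  assume "x \<in> {1 / real n .. 1 - 1 / real n}"
  with assms show "- 4 / real n \<le> Phi n x" "Phi n x \<le> 16 / real n"
    by (rule Phi_lower_bound, rule Phi_upper_bound)
qed

end
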